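(* Let $f:\mathbb{R}^n\to\mathbb{R}$ be twice continuously differentiable, $x_0\in\mathbb{R}^n$, $S_f=\{x: f(x)\le f(x_0)\}$. Assume $\|\nabla f(x)-\nabla f(y)\|\le L_C\|x-y\|$ for all $x,y\in S_f$, and that there are constants $M\ge m>0$ with $M\|z\|^2\ge z^{T}\nabla^2 f(x)z\ge m\|z\|^2$ for all $x\in S_f$, $z\in\mathbb{R}^n$. Let $\{x_k\}$ and the time-stepping sizes $\{\Delta t_k\}$ be generated by the Eptctr algorithm described in the context. Then there exists a positive constant $\delta_{\Delta t}$ such that $\Delta t_k \ge \gamma_2\,\delta_{\Delta t}$ for all $k=1,2,\dots$.
   Context: Eptctr algorithm (explicit pseudo-transient continuation with trust-region updating and switching preconditioning). Parameters: $\eta_a=10^{-6}$, $\eta_1=0.25$, $\gamma_1=2$, $\eta_2=0.75$, $\gamma_2=0.5$, $\theta=10^{-6}$, initial $\Delta t_0=10^{-2}$, counter $K_{bad}=0$, $y_{-1}=s_{-1}=0$. Notation: $g_k=\nabla f(x_k)$, $B_k=\nabla^2 f(x_k)$. Initially $s_0^N$ solves $B_0 s_0^N=-g_0$. At iteration $k$: if the previous trial step was accepted (or $k=0$), compute the direction $s_k^N$ as follows: if $|s_{k-1}^{T}y_{k-1}|>\theta\|s_{k-1}\|^2$ and $K_{bad}<5$, set $s_k^N=-H_kg_k$ with $H_k = I - \frac{y_{k-1}s_{k-1}^{T}+s_{k-1}y_{k-1}^{T}}{y_{k-1}^{T}s_{k-1}} + 2\frac{\|y_{k-1}\|^2}{(y_{k-1}^{T}s_{k-1})^2}s_{k-1}s_{k-1}^{T}$;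 otherwise solve $B_k s_k^N=-g_k$. If the previous trial step was rejected, the previous direction is reused. Set $s_k=\frac{\Delta t_k}{1+\Delta t_k}s_k^N$ and compute $\rho_k=\frac{f(x_k)-f(x_k+s_k)}{m_k(0)-m_k(s_k)}$ with $m_k(s)=\frac{1+0.5\Delta t_k}{1+\Delta t_k}g_k^{T}s$. If $\rho_k\le\eta_a$ the step is rejected ($x_{k+1}=x_k$, and the pair $(s,y)$ used for $H$ is not changed); otherwise it is accepted: $x_{k+1}=x_k+s_k$, $y_k=g_{k+1}-g_k$, $s_k=x_{k+1}-x_k$. Time step update: if $|1-\rho_k|\ge\eta_2$ then $K_{bad}\leftarrow K_{bad}+1$ and $\Delta t_{k+1}=\gamma_2\Delta t_k$; else if $|1-\rho_k|\ge\eta_1$ then $\Delta t_{k+1}=\Delta t_k$; else $\Delta t_{k+1}=\gamma_1\Delta t_k$. The algorithm is considered as generating an infinite sequence (the stopping test $\|g_k\|\le\epsilon$ is not triggered). *)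

theory Defs
  imports "HOL-Analysis.Analysis"
begin

definition eta_a :: real where "eta_a = 1 / 10^6"
definition eta_1 :: real where "eta_1 = 1/4"
definition gamma_1 :: real where "gamma_1 = 2"
definition eta_2 :: real where "eta_2 = 3/4"
definition gamma_2 :: real where "gamma_2 = 1/2"
definition theta_par :: real where "theta_par = 1 / 10^6"
definition dt_init :: real where "dt_init = 1 / 10^2"

text \<open>State of the algorithm at iteration k: iterate x_k, time step dt_k, counter K_bad,
  the direction s_{k-1}^N used at the previous iteration, the pair (s,y) used to build H,
  and whether the previous trial step was accepted (True initially, i.e. k = 0).\<close>
record ('n::finite) ept_state =
  xk :: "real^'n"
  dtk :: real
  kbad :: nat
  sdir :: "real^'n"
  spair :: "real^'n"
  ypair :: "real^'n"
  prev_acc :: bool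

definition outer_prod :: "real^'n::finite \<Rightarrow> real^'n \<Rightarrow> real^'n^'n" where
  "outer_prod a b = (\<chi> i j. a $ i * b $ j)"

definition H_mat :: "real^'n::finite \<Rightarrow> real^'n \<Rightarrow> real^'n^'n" where
  "H_mat s y = mat 1
     - (1 / (y \<bullet> s)) *\<^sub>R (outer_prod y s + outer_prod s y)
     + (2 * (norm y)^2 / (y \<bullet> s)^2) *\<^sub>R outer_prod s s"

text \<open>New search direction s_k^N (computed when the previous step was accepted or k = 0).
  g is the gradient, B the Hessian.\<close>
definition new_dir ::
  "(real^'n::finite \<Rightarrow> real^'n) \<Rightarrow> (real^'n \<Rightarrow> real^'n^'n) \<Rightarrow> ('n, 'z) ept_state_scheme \<Rightarrow> real^'n" where
  "new_dir g B st =
     (if \<bar>spair st \<bullet> ypair st\<bar> > theta_par * (norm (spair st))^2 \<and> kbad st < 5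
      then - (H_mat (spair st) (ypair st) *v g (xk st))
      else matrix_inv (B (xk st)) *v (- g (xk st)))"

definition ept_step ::
  "(real^'n::finite \<Rightarrow> real) \<Rightarrow> (real^'n \<Rightarrow> real^'n) \<Rightarrow> (real^'n \<Rightarrow> real^'n^'n)
    \<Rightarrow> 'n ept_state \<Rightarrow> 'n ept_state" where
  "ept_step f g B st =
    (let x = xk st; dt = dtk st;
         d = (if prev_acc st then new_dir g B st else sdir st);
         s = (dt / (1 + dt)) *\<^sub>R d;
         mdec = - ((1 + dt / 2) / (1 + dt)) * (g x \<bullet> s);
         rho = (f x - f (x + s)) / mdec;
         acc = (rho > eta_a);
         x' = (if acc then x + s else x);
         sp' = (if acc then x' - x else spair st);
         yp' = (if acc then g x' - g x else ypair st);
         kb' = (if \<bar>1 - rho\<bar> \<ge> eta_2 then Suc (kbad st) else kbad st);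
         dt' = (if \<bar>1 - rho\<bar> \<ge> eta_2 then gamma_2 * dt
                else if \<bar>1 - rho\<bar> \<ge> eta_1 then dt else gamma_1 * dt)
     in \<lparr> xk = x', dtk = dt', kbad = kb', sdir = d, spair = sp', ypair = yp',
          prev_acc = acc \<rparr>)"

text \<open>Initial state: x_0, dt_0 = 10^-2, K_bad = 0, s_{-1} = y_{-1} = 0; k = 0 counts as accepted,
  so s_0^N is the Newton direction (the H-test fails for s = 0).\<close>
definition ept_init :: "real^'n::finite \<Rightarrow> 'n ept_state" where
  "ept_init x0 = \<lparr> xk = x0, dtk = dt_init, kbad = 0, sdir = 0, spair = 0, ypair = 0,
                   prev_acc = True \<rparr>"

definition ept_seq ::
  "(real^'n::finite \<Rightarrow> real) \<Rightarrow> (real^'n \<Rightarrow> real^'n) \<Rightarrow> (real^'n \<Rightarrow> real^'n^'n)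
    \<Rightarrow> real^'n \<Rightarrow> nat \<Rightarrow> 'n ept_state" where
  "ept_seq f g B x0 k = (ept_step f g B ^^ k) (ept_init x0)"

end

theory Submission
  imports Defs
begin

(* Along the iteration the iterates stay in the sublevel set S_f and every search direction d
  satisfies a sufficient descent condition g.d <= -c |g|^2 with |d| <= C |g|: for the
  quasi-Newton direction because z.Hz >= |z|^2/2 and |H| is bounded once |s.y| > theta |s|^2 and
  |y| <= L |s|; for the Newton direction because the Hessian is coercive on S_f and, by the
  Lipschitz continuity of the gradient, bounded by L.  A second-order Taylor bound on S_f then
  shows |1 - rho_k| < 3/4, i.e. the time step is never halved, as soon as
  dt_k <= delta = min 1 (c / (4 M C^2)).  Hence dt_k >= gamma_2 min dt_0 delta for all k. *)

lemma matrix_vector_mult_uminus: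
  fixes A :: "'a::ring_1^'n^'m"
  shows "A *v (- v) = - (A *v v)"
  by (metis diff_0 matrix_vector_mult_0_right matrix_vector_mult_diff_distrib)

lemma matrix_inv_right:
  fixes A :: "'a::field^'n^'n"
  assumes "invertible A"
  shows "A ** matrix_inv A = mat 1"
proof -
  have "\<exists>A'. A ** A' = mat 1 \<and> A' ** A = mat 1"
    using assms by (simp add: invertible_def)
  then show ?thesis
    unfolding matrix_inv_def by (rule someI_ex[THEN conjunct1])
qed

lemma newton_direction_bounds:
  fixes A :: "real^'n::finite^'n" and v :: "real^'n"
  assumes bounded: "\<And>h. norm (A *v h) \<le> L * norm h"
    and coercive: "\<And>z. m * (norm z)\<^sup>2 \<le> z \<bullet> (A *v z)" and m: "m > 0" and L: "L > 0"
  shows "v \<bullet> (matrix_inv A *v (- v)) \<le> - (m / L\<^sup>2) * (norm v)\<^sup>2"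
    and "norm (matrix_inv A *v (- v)) \<le> norm v / m"
proof -
  have "A *v z = 0 \<Longrightarrow> z = 0" for z
    using coercive[of z] m by (simp add: mult_le_0_iff)
  then have "invertible A"
    using matrix_left_invertible_ker invertible_left_inverse by blast
  define w where "w = matrix_inv A *v v"
  have Aw: "A *v w = v"
    by (simp add: w_def matrix_vector_mul_assoc matrix_inv_right[OF \<open>invertible A\<close>])
  have vw: "m * (norm w)\<^sup>2 \<le> v \<bullet> w"
    using coercive[of w] Aw by (simp add: inner_commute)
  also have "\<dots> \<le> norm v * norm w"
    by (rule norm_cauchy_schwarz)
  finally have norm_w: "norm w \<le> norm v / m"
    using m by (cases "norm w = 0") (auto simp: power2_eq_square field_simps)
  have "(norm v)\<^sup>2 \<le> L\<^sup>2 * (norm w)\<^sup>2"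
    using bounded[of w] Aw by (metis norm_ge_zero power_mono power_mult_distrib)
  then have "(m / L\<^sup>2) * (norm v)\<^sup>2 \<le> (m / L\<^sup>2) * (L\<^sup>2 * (norm w)\<^sup>2)"
    using m by (intro mult_left_mono) auto
  also have "\<dots> = m * (norm w)\<^sup>2"
    using L by simp
  also note vw
  finally show "v \<bullet> (matrix_inv A *v (- v)) \<le> - (m / L\<^sup>2) * (norm v)\<^sup>2"
    by (simp add: w_def matrix_vector_mult_uminus)
  show "norm (matrix_inv A *v (- v)) \<le> norm v / m"
    using norm_w by (simp add: w_def matrix_vector_mult_uminus)
qed

lemma outer_prod_mult: "outer_prod a b *v z = (b \<bullet> z) *\<^sub>R (a::real^'n::finite)"
  by (simp add: outer_prod_def vec_eq_iff matrix_vector_mult_def inner_vec_def sum_distrib_left algebra_simps)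

lemma H_mat_mult:
  fixes s y z :: "real^'n::finite"
  shows "H_mat s y *v z = z - (1 / (y \<bullet> s)) *\<^sub>R ((s \<bullet> z) *\<^sub>R y + (y \<bullet> z) *\<^sub>R s)
     + (2 * (norm y)\<^sup>2 / (y \<bullet> s)\<^sup>2) *\<^sub>R ((s \<bullet> z) *\<^sub>R s)"
  unfolding H_mat_def matrix_vector_mult_add_rdistrib matrix_vector_mult_diff_rdistrib
      scaleR_matrix_vector_assoc[symmetric] outer_prod_mult matrix_vector_mul_lid
  by (simp add: inner_commute)

(* Also when y . s = 0: then division by zero makes H_mat s y the identity. *)
lemma H_mat_quadratic_ge:
  fixes s y z :: "real^'n::finite"
  shows "(norm z)\<^sup>2 / 2 \<le> z \<bullet> (H_mat s y *v z)"
proof -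
  define a where "a = (s \<bullet> z) / (y \<bullet> s)"
  have "z \<bullet> (H_mat s y *v z) = (norm z)\<^sup>2 - 1 / (y \<bullet> s) * (2 * (s \<bullet> z) * (y \<bullet> z))
      + 2 * (norm y)\<^sup>2 / (y \<bullet> s)\<^sup>2 * (s \<bullet> z)\<^sup>2"
    unfolding H_mat_mult inner_diff_right inner_add_right inner_scaleR_right
    by (simp add: inner_commute power2_eq_square flip: power2_norm_eq_inner)
  also have "\<dots> = (norm z)\<^sup>2 - 2 * a * (y \<bullet> z) + 2 * (norm y)\<^sup>2 * a\<^sup>2"
    by (cases "y \<bullet> s = 0") (simp_all add: a_def power2_eq_square field_simps)
  finally have quadratic: "z \<bullet> (H_mat s y *v z) = (norm z)\<^sup>2 - 2 * a * (y \<bullet> z) + 2 * (norm y)\<^sup>2 * a\<^sup>2" .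
  have "a * (y \<bullet> z) \<le> \<bar>a\<bar> * \<bar>y \<bullet> z\<bar>"
    by (metis abs_ge_self abs_mult)
  also have "\<dots> \<le> \<bar>a\<bar> * (norm y * norm z)"
    by (intro mult_left_mono Cauchy_Schwarz_ineq2) auto
  finally have "a * (y \<bullet> z) \<le> \<bar>a\<bar> * (norm y * norm z)" .
  moreover have "0 \<le> 2 * (norm z / 2 - \<bar>a\<bar> * norm y)\<^sup>2"
    by simp
  ultimately show ?thesis
    unfolding quadratic by (simp add: power2_eq_square algebra_simps)
qed

lemma norm_H_mat_mult_le:
  fixes s y z :: "real^'n::finite"
  assumes th: "th > 0" and sy: "th * (norm s)\<^sup>2 < \<bar>s \<bullet> y\<bar>" and yL: "norm y \<le> L * norm s"
  shows "norm (H_mat s y *v z) \<le> (1 + 2 * L / th + 2 * L\<^sup>2 / th\<^sup>2) * norm z"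
proof -
  have "norm s > 0"
    using sy by auto
  then have L: "L \<ge> 0"
    using yL by (metis norm_ge_zero order_trans zero_le_mult_iff not_le)
  define q where "q = \<bar>y \<bullet> s\<bar>"
  have q: "th * (norm s)\<^sup>2 < q" and th_s: "0 < th * (norm s)\<^sup>2"
    using sy th \<open>norm s > 0\<close> by (simp_all add: q_def inner_commute)
  have rank_two: "norm ((1 / (y \<bullet> s)) *\<^sub>R ((s \<bullet> z) *\<^sub>R y + (y \<bullet> z) *\<^sub>R s)) \<le> (2 * L / th) * norm z"
  proof -
    have "norm ((s \<bullet> z) *\<^sub>R y + (y \<bullet> z) *\<^sub>R s) \<le> \<bar>s \<bullet> z\<bar> * norm y + \<bar>y \<bullet> z\<bar> * norm s"
      by (metis norm_scaleR norm_triangle_ineq real_norm_def)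
    also have "\<dots> \<le> (norm s * norm z) * (L * norm s) + (L * norm s * norm z) * norm s"
      using yL by (intro add_mono mult_mono Cauchy_Schwarz_ineq2 mult_right_mono order_trans[OF Cauchy_Schwarz_ineq2]) auto
    finally have "norm ((s \<bullet> z) *\<^sub>R y + (y \<bullet> z) *\<^sub>R s) \<le> 2 * L * norm z * (norm s)\<^sup>2"
      by (simp add: power2_eq_square algebra_simps)
    then have "norm ((1 / (y \<bullet> s)) *\<^sub>R ((s \<bullet> z) *\<^sub>R y + (y \<bullet> z) *\<^sub>R s)) \<le> 2 * L * norm z * (norm s)\<^sup>2 / q"
      by (simp add: q_def divide_right_mono)
    also have "\<dots> \<le> 2 * L * norm z * (norm s)\<^sup>2 / (th * (norm s)\<^sup>2)"
      using q th_s L by (intro divide_left_mono) auto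
    finally show ?thesis
      using \<open>norm s > 0\<close> by simp
  qed
  have rank_one: "norm ((2 * (norm y)\<^sup>2 / (y \<bullet> s)\<^sup>2) *\<^sub>R ((s \<bullet> z) *\<^sub>R s)) \<le> (2 * L\<^sup>2 / th\<^sup>2) * norm z"
  proof -
    have "norm ((2 * (norm y)\<^sup>2 / (y \<bullet> s)\<^sup>2) *\<^sub>R ((s \<bullet> z) *\<^sub>R s)) = 2 * (norm y)\<^sup>2 * (\<bar>s \<bullet> z\<bar> * norm s) / q\<^sup>2"
      by (simp add: q_def abs_mult)
    also have "\<dots> \<le> 2 * (L * norm s)\<^sup>2 * (norm s * norm z * norm s) / q\<^sup>2"
      using yL by (intro divide_right_mono mult_mono mult_left_mono power_mono mult_right_mono Cauchy_Schwarz_ineq2) auto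
    also have "\<dots> = 2 * L\<^sup>2 * norm z * ((norm s)\<^sup>2)\<^sup>2 / q\<^sup>2"
      by (simp add: power2_eq_square)
    also have "\<dots> \<le> 2 * L\<^sup>2 * norm z * ((norm s)\<^sup>2)\<^sup>2 / (th * (norm s)\<^sup>2)\<^sup>2"
      using q th_s by (intro divide_left_mono power_mono mult_pos_pos) auto
    also have "\<dots> = (2 * L\<^sup>2 / th\<^sup>2) * norm z"
      using \<open>norm s > 0\<close> th by (simp add: power_mult_distrib)
    finally show ?thesis .
  qed
  have "norm (H_mat s y *v z) \<le> norm z + norm ((1 / (y \<bullet> s)) *\<^sub>R ((s \<bullet> z) *\<^sub>R y + (y \<bullet> z) *\<^sub>R s))
      + norm ((2 * (norm y)\<^sup>2 / (y \<bullet> s)\<^sup>2) *\<^sub>R ((s \<bullet> z) *\<^sub>R s))"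
    unfolding H_mat_mult by (meson norm_triangle_ineq norm_triangle_ineq4 add_mono order_trans order_refl)
  then show ?thesis
    using rank_two rank_one by (simp add: algebra_simps)
qed

lemma stays_below_initial_value:
  fixes \<phi> :: "real \<Rightarrow> real"
  assumes cont: "continuous_on {0..b} \<phi>"
    and "d > 0" and initial: "\<And>u. 0 < u \<Longrightarrow> u < d \<Longrightarrow> \<phi> u < \<phi> 0"
    and step: "\<And>t. 0 < t \<Longrightarrow> t \<le> b \<Longrightarrow> (\<And>u. 0 < u \<Longrightarrow> u < t \<Longrightarrow> \<phi> u < \<phi> 0) \<Longrightarrow> \<phi> t < \<phi> 0"
    and t: "0 < t" "t \<le> b"
  shows "\<phi> t < \<phi> 0"
proof (rule ccontr)
  assume not_below: "\<not> \<phi> t < \<phi> 0"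
  then have "d \<le> t"
    using initial t by force
  define T where "T = {u \<in> {d/2..t}. \<phi> 0 \<le> \<phi> u}"
  have "closed T"
    unfolding T_def using \<open>d > 0\<close> t
    by (intro continuous_on_closed_Collect_le continuous_on_const continuous_on_subset[OF cont]) auto
  moreover have "t \<in> T"
    using not_below \<open>d \<le> t\<close> \<open>d > 0\<close> by (auto simp: T_def)
  moreover have "bdd_below T"
    by (rule bdd_belowI[of _ "d/2"]) (auto simp: T_def)
  ultimately have "Inf T \<in> T"
    using closed_contains_Inf by blast
  then have first: "d/2 \<le> Inf T" "Inf T \<le> t" "\<phi> 0 \<le> \<phi> (Inf T)"
    by (auto simp: T_def)
  have "\<phi> u < \<phi> 0" if "0 < u" "u < Inf T" for u
  proof (cases "u < d")
    case True
    then show ?thesis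
      using initial \<open>0 < u\<close> by blast
  next
    case False
    have "u \<notin> T"
      using cInf_lower[OF _ \<open>bdd_below T\<close>, of u] \<open>u < Inf T\<close> by linarith
    then show ?thesis
      using False \<open>u < Inf T\<close> \<open>d > 0\<close> first by (auto simp: T_def)
  qed
  moreover have "0 < Inf T" "Inf T \<le> b"
    using first t \<open>d > 0\<close> by linarith+
  ultimately have "\<phi> (Inf T) < \<phi> 0"
    using step by blast
  then show False
    using first by simp
qed

locale gradient_hessian =
  fixes f :: "real^'n::finite \<Rightarrow> real" and g :: "real^'n \<Rightarrow> real^'n" and B :: "real^'n \<Rightarrow> real^'n^'n"
  assumes grad: "\<And>x. (f has_derivative (\<lambda>h. g x \<bullet> h)) (at x)"
    and hess: "\<And>x. (g has_derivative (\<lambda>h. B x *v h)) (at x)"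
begin

lemma line_derivatives:
  shows "DERIV (\<lambda>t. f (x + t *\<^sub>R s)) t :> g (x + t *\<^sub>R s) \<bullet> s"
    and "DERIV (\<lambda>t. g (x + t *\<^sub>R s) \<bullet> w) t :> (B (x + t *\<^sub>R s) *v s) \<bullet> w"
proof -
  have line: "((\<lambda>t. x + t *\<^sub>R s) has_derivative (\<lambda>h. h *\<^sub>R s)) (at t)"
    by (intro derivative_eq_intros) auto
  show "DERIV (\<lambda>t. f (x + t *\<^sub>R s)) t :> g (x + t *\<^sub>R s) \<bullet> s"
    unfolding has_field_derivative_def
    by (rule has_derivative_eq_rhs[OF has_derivative_compose[OF line grad]]) auto
  show "DERIV (\<lambda>t. g (x + t *\<^sub>R s) \<bullet> w) t :> (B (x + t *\<^sub>R s) *v s) \<bullet> w"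
    unfolding has_field_derivative_def
    by (rule has_derivative_eq_rhs[OF has_derivative_inner_left[OF has_derivative_compose[OF line hess]]])
      (auto simp: matrix_vector_mult_scaleR)
qed

(* The Lipschitz bound is only available on the sublevel set, which x + t h does not leave for
  small t > 0 when h is a descent direction. *)
lemma hessian_norm_le_on_descent_dir:
  assumes lip: "\<And>y. f y \<le> c \<Longrightarrow> norm (g y - g x) \<le> L * norm (y - x)"
    and fx: "f x \<le> c" and descent: "g x \<bullet> h < 0"
  shows "norm (B x *v h) \<le> L * norm h"
proof -
  obtain d where "d > 0" and "\<And>t. 0 < t \<Longrightarrow> t < d \<Longrightarrow> f (x + t *\<^sub>R h) < f x"
    using DERIV_neg_dec_right[OF line_derivatives(1)[of x h 0]] descent by auto
  then have sublevel: "eventually (\<lambda>t. f (x + t *\<^sub>R h) \<le> c) (at_right 0)"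
    using fx unfolding eventually_at_right_field by (metis less_le_trans order.strict_implies_order)
  have inner_le: "\<bar>(B x *v h) \<bullet> w\<bar> \<le> L * norm h * norm w" for w
  proof -
    define \<psi> where "\<psi> t = g (x + t *\<^sub>R h) \<bullet> w" for t
    have "((\<lambda>t. (\<psi> t - \<psi> 0) / t) \<longlongrightarrow> (B x *v h) \<bullet> w) (at 0)"
      using line_derivatives(2)[of x h w 0]
      unfolding \<psi>_def has_field_derivative_iff by simp
    then have "((\<lambda>t. \<bar>(\<psi> t - \<psi> 0) / t\<bar>) \<longlongrightarrow> \<bar>(B x *v h) \<bullet> w\<bar>) (at_right 0)"
      using filterlim_at_split tendsto_rabs by blast
    moreover have "eventually (\<lambda>t. \<bar>(\<psi> t - \<psi> 0) / t\<bar> \<le> L * norm h * norm w) (at_right 0)"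
      using sublevel eventually_at_right_less
    proof eventually_elim
      case (elim t)
      have "\<bar>\<psi> t - \<psi> 0\<bar> \<le> norm (g (x + t *\<^sub>R h) - g x) * norm w"
        unfolding \<psi>_def by (metis Cauchy_Schwarz_ineq2 add.right_neutral inner_diff_left scale_zero_left)
      also have "\<dots> \<le> L * (t * norm h) * norm w"
        using lip[OF elim(1)] elim(2) by (intro mult_right_mono) auto
      finally show ?case using elim(2) by (simp add: divide_le_eq mult_ac)
    qed
    ultimately show ?thesis by (rule tendsto_upperbound) simp
  qed
  have "(norm (B x *v h))\<^sup>2 \<le> L * norm h * norm (B x *v h)"
    using inner_le[of "B x *v h"] by (simp add: power2_norm_eq_inner)
  moreover have "0 \<le> L * norm h * norm h"
    using inner_le[of h] by simp
  ultimately show ?thesis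
    by (cases "B x *v h = 0") (auto simp: power2_eq_square mult_le_cancel_right zero_le_mult_iff)
qed

lemma hessian_norm_le:
  assumes lip: "\<And>y. f y \<le> c \<Longrightarrow> norm (g y - g x) \<le> L * norm (y - x)"
    and fx: "f x \<le> c" and "g x \<noteq> 0"
  shows "norm (B x *v h) \<le> L * norm h"
proof -
  let ?bounded = "{h. norm (B x *v h) \<le> L * norm h}"
  have "closed ?bounded"
    by (intro closed_Collect_le continuous_intros)
  moreover have "{h. g x \<bullet> h < 0} \<subseteq> ?bounded"
    using hessian_norm_le_on_descent_dir[OF lip fx] by blast
  ultimately have "closure {h. g x \<bullet> h < 0} \<subseteq> ?bounded"
    by (rule closure_minimal[rotated])
  then have "{h. g x \<bullet> h \<le> 0} \<subseteq> ?bounded"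
    using \<open>g x \<noteq> 0\<close> by simp
  then show ?thesis
    by (cases "g x \<bullet> h \<le> 0") (auto simp: matrix_vector_mult_uminus dest: subsetD[of _ _ "- h"])
qed

lemma taylor_bounds_on_segment:
  assumes curv: "\<And>z. f z \<le> c \<Longrightarrow> 0 \<le> s \<bullet> (B z *v s) \<and> s \<bullet> (B z *v s) \<le> K"
    and t: "t > 0" and segment: "\<And>u. 0 \<le> u \<Longrightarrow> u < t \<Longrightarrow> f (x + u *\<^sub>R s) \<le> c"
  shows "t * (g x \<bullet> s) \<le> f (x + t *\<^sub>R s) - f x"
    and "f (x + t *\<^sub>R s) - f x \<le> t * (g x \<bullet> s + t * K)"
proof -
  obtain z where z: "0 < z" "z < t"
    and mvt_f: "f (x + t *\<^sub>R s) - f (x + 0 *\<^sub>R s) = (t - 0) * (g (x + z *\<^sub>R s) \<bullet> s)"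
    using MVT2[OF t line_derivatives(1)] by blast
  obtain w where w: "0 < w" "w < z"
    and mvt_g: "g (x + z *\<^sub>R s) \<bullet> s - g (x + 0 *\<^sub>R s) \<bullet> s = (z - 0) * ((B (x + w *\<^sub>R s) *v s) \<bullet> s)"
    using MVT2[OF z(1) line_derivatives(2)] by blast
  have "0 \<le> (B (x + w *\<^sub>R s) *v s) \<bullet> s" "(B (x + w *\<^sub>R s) *v s) \<bullet> s \<le> K"
    using curv[OF segment[of w]] w z by (auto simp: inner_commute)
  then have "0 \<le> z * ((B (x + w *\<^sub>R s) *v s) \<bullet> s)" "z * ((B (x + w *\<^sub>R s) *v s) \<bullet> s) \<le> t * K"
    using z by (auto intro: mult_mono)
  then have "g x \<bullet> s \<le> g (x + z *\<^sub>R s) \<bullet> s" "g (x + z *\<^sub>R s) \<bullet> s \<le> g x \<bullet> s + t * K"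
    using mvt_g by auto
  then show "t * (g x \<bullet> s) \<le> f (x + t *\<^sub>R s) - f x"
    and "f (x + t *\<^sub>R s) - f x \<le> t * (g x \<bullet> s + t * K)"
    using mvt_f t by (simp_all add: mult_left_mono)
qed

(* The curvature bound is only available on the sublevel set; K < - g x . s keeps the whole
  segment from x to x + s inside it. *)
lemma taylor_bounds_descent_step:
  assumes curv: "\<And>z. f z \<le> c \<Longrightarrow> 0 \<le> s \<bullet> (B z *v s) \<and> s \<bullet> (B z *v s) \<le> K"
    and fx: "f x \<le> c" and small: "K < - (g x \<bullet> s)"
  shows "g x \<bullet> s \<le> f (x + s) - f x" and "f (x + s) - f x \<le> g x \<bullet> s + K"
proof -
  define \<phi> where "\<phi> t = f (x + t *\<^sub>R s)" for t
  have "K \<ge> 0"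
    using curv[OF fx] by auto
  have "continuous_on {0..1} \<phi>"
    unfolding \<phi>_def
    by (intro continuous_at_imp_continuous_on ballI DERIV_isCont[OF line_derivatives(1)])
  moreover obtain d where "d > 0" and initial: "\<And>u. 0 < u \<Longrightarrow> u < d \<Longrightarrow> \<phi> u < \<phi> 0"
    using DERIV_neg_dec_right[OF line_derivatives(1)[of x s 0]] small \<open>K \<ge> 0\<close>
    unfolding \<phi>_def by force
  moreover have step: "\<phi> t < \<phi> 0"
    if "0 < t" "t \<le> 1" and below: "\<And>u. 0 < u \<Longrightarrow> u < t \<Longrightarrow> \<phi> u < \<phi> 0" for t
  proof -
    have "f (x + u *\<^sub>R s) \<le> c" if "0 \<le> u" "u < t" for u
      using below[of u] that fx by (cases "u = 0") (auto simp: \<phi>_def)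
    then have "\<phi> t - \<phi> 0 \<le> t * (g x \<bullet> s + t * K)"
      using taylor_bounds_on_segment(2)[OF curv \<open>0 < t\<close>] by (simp add: \<phi>_def)
    moreover have "t * K \<le> K"
      using \<open>K \<ge> 0\<close> \<open>0 < t\<close> \<open>t \<le> 1\<close> by (simp add: mult_left_le_one_le)
    then have "t * (g x \<bullet> s + t * K) < 0"
      using small \<open>0 < t\<close> by (intro mult_pos_neg) auto
    ultimately show ?thesis
      by linarith
  qed
  ultimately have below_start: "\<phi> u < \<phi> 0" if "0 < u" "u \<le> 1" for u
    using that by (rule stays_below_initial_value[where b = 1])
  have "f (x + u *\<^sub>R s) \<le> c" if "0 \<le> u" "u < 1" for u
  proof (cases "u = 0")
    case False
    then have "f (x + u *\<^sub>R s) < f x"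
      using below_start[of u] that by (simp add: \<phi>_def)
    then show ?thesis
      using fx by linarith
  qed (use fx in simp)
  from taylor_bounds_on_segment[OF curv zero_less_one this]
  show "g x \<bullet> s \<le> f (x + s) - f x" and "f (x + s) - f x \<le> g x \<bullet> s + K"
    by simp_all
qed

end

definition trial_step :: "real \<Rightarrow> real^'n::finite \<Rightarrow> real^'n" where
  "trial_step dt d = (dt / (1 + dt)) *\<^sub>R d"

definition reduction_ratio ::
  "(real^'n::finite \<Rightarrow> real) \<Rightarrow> (real^'n \<Rightarrow> real^'n) \<Rightarrow> real \<Rightarrow> real^'n \<Rightarrow> real^'n \<Rightarrow> real" where
  "reduction_ratio f g dt x d =
     (f x - f (x + trial_step dt d)) / (- ((1 + dt / 2) / (1 + dt)) * (g x \<bullet> trial_step dt d))"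

definition ept_direction ::
  "(real^'n::finite \<Rightarrow> real^'n) \<Rightarrow> (real^'n \<Rightarrow> real^'n^'n) \<Rightarrow> 'n ept_state \<Rightarrow> real^'n" where
  "ept_direction g B st = (if prev_acc st then new_dir g B st else sdir st)"

lemma ept_step_fields:
  fixes f :: "real^'n::finite \<Rightarrow> real" and g :: "real^'n \<Rightarrow> real^'n" and B :: "real^'n \<Rightarrow> real^'n^'n"
    and st :: "'n ept_state"
  defines "d \<equiv> ept_direction g B st"
    and "s \<equiv> trial_step (dtk st) (ept_direction g B st)"
    and "\<rho> \<equiv> reduction_ratio f g (dtk st) (xk st) (ept_direction g B st)"
  shows "xk (ept_step f g B st) = (if eta_a < \<rho> then xk st + s else xk st)"
    and "dtk (ept_step f g B st) = (if eta_2 \<le> \<bar>1 - \<rho>\<bar> then gamma_2 * dtk st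
           else if eta_1 \<le> \<bar>1 - \<rho>\<bar> then dtk st else gamma_1 * dtk st)"
    and "spair (ept_step f g B st) = (if eta_a < \<rho> then s else spair st)"
    and "ypair (ept_step f g B st) = (if eta_a < \<rho> then g (xk st + s) - g (xk st) else ypair st)"
    and "prev_acc (ept_step f g B st) \<longleftrightarrow> eta_a < \<rho>"
    and "sdir (ept_step f g B st) = d"
  unfolding ept_step_def Let_def assms ept_direction_def reduction_ratio_def trial_step_def
  by simp_all

lemma positive_ratio_imp_decrease:
  assumes "g x \<bullet> d < 0" and "0 < dt" and "0 < reduction_ratio f g dt x d"
  shows "f (x + trial_step dt d) < f x"
proof -
  define pred where "pred = - ((1 + dt / 2) / (1 + dt)) * (g x \<bullet> trial_step dt d)"
  have "0 < (1 + dt / 2) / (1 + dt) * (dt / (1 + dt) * - (g x \<bullet> d))"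
    using assms(1,2) by (intro mult_pos_pos) auto
  then have "0 < pred"
    by (simp add: pred_def trial_step_def)
  moreover have "0 < (f x - f (x + trial_step dt d)) / pred"
    using assms(3) by (simp add: reduction_ratio_def pred_def)
  ultimately show ?thesis
    by (simp add: zero_less_divide_iff)
qed

locale eptctr_problem = gradient_hessian f g B
  for f :: "real^'n::finite \<Rightarrow> real" and g :: "real^'n \<Rightarrow> real^'n" and B :: "real^'n \<Rightarrow> real^'n^'n" +
  fixes x0 :: "real^'n" and L m M :: real
  assumes lipschitz: "\<And>x y. f x \<le> f x0 \<Longrightarrow> f y \<le> f x0 \<Longrightarrow> norm (g x - g y) \<le> L * norm (x - y)"
    and L_pos: "0 < L" and m_pos: "0 < m" and m_le_M: "m \<le> M"
    and hessian_bounds: "\<And>x z. f x \<le> f x0 \<Longrightarrow>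
      m * (norm z)\<^sup>2 \<le> z \<bullet> (B x *v z) \<and> z \<bullet> (B x *v z) \<le> M * (norm z)\<^sup>2"
begin

definition descent_const :: real where
  "descent_const = min (m / L\<^sup>2) (1 / 2)"

definition dir_bound_const :: real where
  "dir_bound_const = max (1 / m) (1 + 2 * L / theta_par + 2 * L\<^sup>2 / theta_par\<^sup>2)"

definition dt_threshold :: real where
  "dt_threshold = min 1 (descent_const / (4 * M * dir_bound_const\<^sup>2))"

definition sufficient_descent :: "real^'n \<Rightarrow> real^'n \<Rightarrow> bool" where
  "sufficient_descent x d \<longleftrightarrow>
     g x \<bullet> d \<le> - descent_const * (norm (g x))\<^sup>2 \<and> norm d \<le> dir_bound_const * norm (g x)"

(* A rejected step reuses its direction, so the descent property of sdir must be carried along. *)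
definition ept_invariant :: "'n ept_state \<Rightarrow> bool" where
  "ept_invariant st \<longleftrightarrow> f (xk st) \<le> f x0 \<and> 0 < dtk st \<and> norm (ypair st) \<le> L * norm (spair st)
     \<and> (\<not> prev_acc st \<longrightarrow> sufficient_descent (xk st) (sdir st))"

lemma descent_const_pos: "0 < descent_const"
  using m_pos L_pos by (simp add: descent_const_def)

lemma dir_bound_const_pos: "0 < dir_bound_const"
  using m_pos by (simp add: dir_bound_const_def less_max_iff_disj)

lemma dt_threshold_pos: "0 < dt_threshold"
  using descent_const_pos dir_bound_const_pos m_pos m_le_M by (simp add: dt_threshold_def)

lemma sufficient_descentI:
  assumes "g x \<bullet> d \<le> - c * (norm (g x))\<^sup>2" and "norm d \<le> C * norm (g x)"
    and "descent_const \<le> c" and "C \<le> dir_bound_const"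
  shows "sufficient_descent x d"
proof -
  have "descent_const * (norm (g x))\<^sup>2 \<le> c * (norm (g x))\<^sup>2"
    using assms(3) by (intro mult_right_mono) auto
  moreover have "C * norm (g x) \<le> dir_bound_const * norm (g x)"
    using assms(4) by (intro mult_right_mono) auto
  ultimately show ?thesis
    using assms(1,2) by (simp add: sufficient_descent_def)
qed

lemma sufficient_descent_inner_neg:
  assumes "sufficient_descent x d" and "g x \<noteq> 0"
  shows "g x \<bullet> d < 0"
proof -
  have "0 < descent_const * (norm (g x))\<^sup>2"
    using descent_const_pos assms(2) by simp
  then show ?thesis
    using assms(1) by (simp add: sufficient_descent_def)
qed

lemma new_dir_sufficient_descent:
  assumes fx: "f (xk st) \<le> f x0" and g_nz: "g (xk st) \<noteq> 0"
    and secant: "norm (ypair st) \<le> L * norm (spair st)"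
  shows "sufficient_descent (xk st) (new_dir g B st)"
proof (cases "theta_par * (norm (spair st))\<^sup>2 < \<bar>spair st \<bullet> ypair st\<bar> \<and> kbad st < 5")
  case True
  let ?H = "H_mat (spair st) (ypair st)"
  have dir: "new_dir g B st = - (?H *v g (xk st))"
    using True by (simp add: new_dir_def)
  have "(norm (g (xk st)))\<^sup>2 / 2 \<le> g (xk st) \<bullet> (?H *v g (xk st))"
    by (rule H_mat_quadratic_ge)
  moreover have "norm (?H *v g (xk st))
      \<le> (1 + 2 * L / theta_par + 2 * L\<^sup>2 / theta_par\<^sup>2) * norm (g (xk st))"
    using True secant by (intro norm_H_mat_mult_le) (auto simp: theta_par_def)
  ultimately show ?thesis
    unfolding dir by (intro sufficient_descentI[where c = "1/2"])
      (auto simp: descent_const_def dir_bound_const_def min_def)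
next
  case False
  have dir: "new_dir g B st = matrix_inv (B (xk st)) *v (- g (xk st))"
    unfolding new_dir_def using False by (rule if_not_P)
  have bounded: "norm (B (xk st) *v h) \<le> L * norm h" for h
    using lipschitz fx g_nz by (intro hessian_norm_le[OF _ fx]) auto
  have coercive: "m * (norm z)\<^sup>2 \<le> z \<bullet> (B (xk st) *v z)" for z
    using hessian_bounds[OF fx] by blast
  note newton = newton_direction_bounds[OF bounded coercive m_pos L_pos, of "g (xk st)"]
  have "norm (new_dir g B st) \<le> 1 / m * norm (g (xk st))"
    using newton(2) by (simp add: dir)
  with newton(1) show ?thesis
    unfolding dir by (rule sufficient_descentI) (auto simp: descent_const_def dir_bound_const_def)
qed

lemma curvature_term_le_quarter_decrease:
  assumes descent: "sufficient_descent x d" and dt: "0 < dt" "dt \<le> dt_threshold"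
  shows "M * (norm (trial_step dt d))\<^sup>2 \<le> - (g x \<bullet> trial_step dt d) / 4"
proof -
  define \<tau> where "\<tau> = dt / (1 + dt)"
  let ?c = descent_const and ?C = dir_bound_const and ?G = "(norm (g x))\<^sup>2"
  have \<tau>: "0 < \<tau>" "\<tau> \<le> dt"
    using dt by (auto simp: \<tau>_def field_simps)
  have "0 \<le> M"
    using m_pos m_le_M by simp
  have "dt * (M * ?C\<^sup>2) \<le> ?c / 4"
    using dt(2) m_pos m_le_M dir_bound_const_pos by (auto simp: dt_threshold_def field_simps)
  have "norm (trial_step dt d) = \<tau> * norm d"
    using \<tau> by (simp add: trial_step_def \<tau>_def)
  then have "M * (norm (trial_step dt d))\<^sup>2 = (M * \<tau>\<^sup>2) * (norm d)\<^sup>2"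
    by (simp add: power_mult_distrib)
  also have "\<dots> \<le> (M * \<tau>\<^sup>2) * (?C * norm (g x))\<^sup>2"
    using descent \<open>0 \<le> M\<close> by (intro mult_left_mono power_mono) (auto simp: sufficient_descent_def)
  also have "\<dots> = \<tau> * (\<tau> * (M * ?C\<^sup>2)) * ?G"
    by (simp add: power_mult_distrib power2_eq_square)
  also have "\<dots> \<le> \<tau> * (?c / 4) * ?G"
  proof -
    have "\<tau> * (M * ?C\<^sup>2) \<le> dt * (M * ?C\<^sup>2)"
      using \<tau> \<open>0 \<le> M\<close> by (intro mult_right_mono) auto
    then show ?thesis
      using \<tau> \<open>dt * (M * ?C\<^sup>2) \<le> ?c / 4\<close> by (intro mult_right_mono mult_left_mono) auto
  qed
  also have "\<dots> \<le> \<tau> * - (g x \<bullet> d) / 4"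
    using mult_left_mono[of "?c * ?G" "- (g x \<bullet> d)" \<tau>] descent \<tau> by (simp add: sufficient_descent_def)
  also have "\<dots> = - (g x \<bullet> trial_step dt d) / 4"
    by (simp add: trial_step_def \<tau>_def)
  finally show ?thesis .
qed

lemma reduction_ratio_near_one:
  assumes fx: "f x \<le> f x0" and g_nz: "g x \<noteq> 0" and descent: "sufficient_descent x d"
    and dt: "0 < dt" "dt \<le> dt_threshold"
  shows "\<bar>1 - reduction_ratio f g dt x d\<bar> < 3/4"
proof -
  define s where "s = trial_step dt d"
  define a where "a = - (g x \<bullet> s)"
  define \<kappa> where "\<kappa> = (1 + dt / 2) / (1 + dt)"
  have "0 < a"
    using sufficient_descent_inner_neg[OF descent g_nz] dt
    by (simp add: a_def s_def trial_step_def mult_pos_neg divide_neg_pos)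
  have "0 \<le> m * (norm s)\<^sup>2"
    using m_pos by simp
  then have "0 \<le> s \<bullet> (B z *v s) \<and> s \<bullet> (B z *v s) \<le> M * (norm s)\<^sup>2" if "f z \<le> f x0" for z
    using hessian_bounds[OF that, of s] by auto
  moreover have "M * (norm s)\<^sup>2 \<le> a / 4"
    using curvature_term_le_quarter_decrease[OF descent dt] by (simp add: s_def a_def)
  ultimately have "3/4 * a \<le> f x - f (x + s)" "f x - f (x + s) \<le> a"
    using taylor_bounds_descent_step[of "f x0" s] fx \<open>0 < a\<close> by (force simp: a_def)+
  moreover have "3/4 \<le> \<kappa>" "\<kappa> \<le> 1"
    using dt dt_threshold_def by (auto simp: \<kappa>_def field_simps)
  moreover have "\<kappa> * a \<le> a" "a \<le> 4/3 * (\<kappa> * a)"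
    using calculation(3,4) \<open>0 < a\<close> by simp_all
  ultimately have "3/4 * (\<kappa> * a) \<le> f x - f (x + s)" "f x - f (x + s) \<le> 4/3 * (\<kappa> * a)"
    by linarith+
  moreover have "reduction_ratio f g dt x d = (f x - f (x + s)) / (\<kappa> * a)"
    by (simp add: reduction_ratio_def s_def \<kappa>_def a_def)
  moreover have "0 < \<kappa> * a"
    using \<open>3/4 \<le> \<kappa>\<close> \<open>0 < a\<close> by simp
  ultimately have "3/4 \<le> reduction_ratio f g dt x d" "reduction_ratio f g dt x d \<le> 4/3"
    by (simp_all add: pos_le_divide_eq pos_divide_le_eq)
  then show ?thesis
    unfolding abs_less_iff by linarith
qed

lemma ept_direction_sufficient_descent:
  assumes "ept_invariant st" and "g (xk st) \<noteq> 0"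
  shows "sufficient_descent (xk st) (ept_direction g B st)"
  using assms new_dir_sufficient_descent by (auto simp: ept_direction_def ept_invariant_def)

lemma ept_step_invariant:
  assumes inv: "ept_invariant st" and g_nz: "g (xk st) \<noteq> 0"
  shows "ept_invariant (ept_step f g B st)"
proof -
  let ?x = "xk st" and ?d = "ept_direction g B st" and ?s = "trial_step (dtk st) (ept_direction g B st)"
  have descent: "sufficient_descent ?x ?d"
    using ept_direction_sufficient_descent[OF inv g_nz] .
  have fx: "f ?x \<le> f x0" and dt: "0 < dtk st"
    using inv by (auto simp: ept_invariant_def)
  have accepted: "f (?x + ?s) \<le> f x0" if "eta_a < reduction_ratio f g (dtk st) ?x ?d"
  proof -
    have "0 < reduction_ratio f g (dtk st) ?x ?d"
      using that by (simp add: eta_a_def)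
    then have "f (?x + ?s) < f ?x"
      using positive_ratio_imp_decrease sufficient_descent_inner_neg[OF descent g_nz] dt by blast
    then show ?thesis
      using fx by simp
  qed
  then have "norm (g (?x + ?s) - g ?x) \<le> L * norm ?s"
    if "eta_a < reduction_ratio f g (dtk st) ?x ?d"
    using lipschitz[OF _ fx] that by fastforce
  with inv accepted descent show ?thesis
    unfolding ept_invariant_def ept_step_fields
    by (auto simp: gamma_1_def gamma_2_def)
qed

lemma ept_step_dtk_ge:
  assumes "ept_invariant st"
  shows "gamma_2 * dtk st \<le> dtk (ept_step f g B st)"
  using assms by (auto simp: ept_step_fields ept_invariant_def gamma_1_def gamma_2_def)

lemma ept_step_dtk_ge_below_threshold:
  assumes inv: "ept_invariant st" and g_nz: "g (xk st) \<noteq> 0" and small: "dtk st \<le> dt_threshold"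
  shows "dtk st \<le> dtk (ept_step f g B st)"
proof -
  have "\<bar>1 - reduction_ratio f g (dtk st) (xk st) (ept_direction g B st)\<bar> < 3/4"
    using inv small ept_direction_sufficient_descent[OF inv g_nz]
    by (intro reduction_ratio_near_one g_nz) (auto simp: ept_invariant_def)
  then show ?thesis
    using inv by (auto simp: ept_step_fields ept_invariant_def eta_1_def eta_2_def gamma_1_def)
qed

lemma ept_seq_invariant:
  assumes "\<And>k. g (xk (ept_seq f g B x0 k)) \<noteq> 0"
  shows "ept_invariant (ept_seq f g B x0 k)"
proof (induction k)
  case 0
  then show ?case
    by (simp add: ept_seq_def ept_init_def ept_invariant_def dt_init_def)
next
  case (Suc k)
  then show ?case
    using ept_step_invariant assms by (simp add: ept_seq_def)
qed

lemma ept_seq_dtk_lower_bound: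
  assumes "\<And>k. g (xk (ept_seq f g B x0 k)) \<noteq> 0"
  shows "gamma_2 * min dt_init dt_threshold \<le> dtk (ept_seq f g B x0 k)"
proof (induction k)
  case 0
  then show ?case
    by (simp add: ept_seq_def ept_init_def gamma_2_def dt_init_def)
next
  case (Suc k)
  let ?st = "ept_seq f g B x0 k"
  have step: "ept_seq f g B x0 (Suc k) = ept_step f g B ?st"
    by (simp add: ept_seq_def)
  have inv: "ept_invariant ?st"
    using ept_seq_invariant[OF assms] .
  show ?case
  proof (cases "dtk ?st \<le> dt_threshold")
    case True
    then show ?thesis
      using Suc ept_step_dtk_ge_below_threshold[OF inv assms] by (simp add: step)
  next
    case False
    then have "gamma_2 * min dt_init dt_threshold \<le> gamma_2 * dtk ?st"
      by (simp add: gamma_2_def)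
    then show ?thesis
      using ept_step_dtk_ge[OF inv] by (simp add: step)
  qed
qed

end

theorem lemma3:
  fixes f :: "real^'n \<Rightarrow> real"
    and g :: "real^'n \<Rightarrow> real^'n"
    and B :: "real^'n \<Rightarrow> real^'n^'n"
    and x0 :: "real^'n"
    and L_C m M \<epsilon> :: real
  assumes grad: "\<And>x. (f has_derivative (\<lambda>h. g x \<bullet> h)) (at x)"
    and hess: "\<And>x. (g has_derivative (\<lambda>h. B x *v h)) (at x)"
    and hess_cont: "continuous_on UNIV B"
    and lip: "\<And>x y. x \<in> {x. f x \<le> f x0} \<Longrightarrow> y \<in> {x. f x \<le> f x0} \<Longrightarrow>
                 norm (g x - g y) \<le> L_C * norm (x - y)"
    and mpos: "0 < m" and mM: "m \<le> M"
    and hess_bnd: "\<And>x z. x \<in> {x. f x \<le> f x0} \<Longrightarrow>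
                 M * (norm z)^2 \<ge> z \<bullet> (B x *v z) \<and> z \<bullet> (B x *v z) \<ge> m * (norm z)^2"
    and eps: "0 < \<epsilon>"
    and nostop: "\<And>k. norm (g (xk (ept_seq f g B x0 k))) > \<epsilon>"
  shows "\<exists>\<delta>>0. \<forall>k\<ge>1. dtk (ept_seq f g B x0 k) \<ge> gamma_2 * \<delta>"
proof -
  define L where "L = max L_C 1"
  interpret eptctr_problem f g B x0 L m M
  proof unfold_locales
    show "norm (g x - g y) \<le> L * norm (x - y)" if "f x \<le> f x0" "f y \<le> f x0" for x y
      using lip[of x y] that mult_right_mono[of L_C L "norm (x - y)"] by (simp add: L_def)
  qed (use grad hess mpos mM hess_bnd in \<open>auto simp: L_def\<close>)
  have "g (xk (ept_seq f g B x0 k)) \<noteq> 0" for k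
    using nostop[of k] eps by auto
  then have "\<forall>k. gamma_2 * min dt_init dt_threshold \<le> dtk (ept_seq f g B x0 k)"
    using ept_seq_dtk_lower_bound by blast
  moreover have "0 < min dt_init dt_threshold"
    using dt_threshold_pos by (simp add: dt_init_def)
  ultimately show ?thesis
    by blast
qed

end
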